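(* Let $M$ be a closed Riemannian manifold with fundamental group $\Gamma$ and universal cover $\widetilde{M}$, let $\Gamma$ act freely and continuously on a Cantor set $X$, and let $\Gamma$ act diagonally on $X\times\widetilde{M}$ (via deck transformations on $\widetilde{M}$). Let $\Gamma(A_1 \times S_1), \ldots, \Gamma(A_r \times S_r)$ be finitely many thick orbits in $X \times \widetilde{M}$. Then for any ball $B(\widetilde{p}, R)$ in $\widetilde{M}$, there exists a partition of $X$ into finitely many clopen sets $X_1, \ldots, X_k$ such that for any $i \in \{1, \ldots, k\}$, any $x, y \in X_i$, any $\widetilde{q} \in B(\widetilde{p}, R)$, and any $j \in \{1, \ldots, r\}$, we have $(x, \widetilde{q}) \in \Gamma(A_j \times S_j)$ if and only if $(y, \widetilde{q}) \in \Gamma(A_j \times S_j)$.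
   Context: A thick set is a subset of $X\times\widetilde{M}$ of the form $A\times S$ with $A\subseteq X$ clopen and $S\subseteq\widetilde{M}$ bounded. A thick set has a non-self-intersecting orbit if it is disjoint from each of its translates $\gamma(A\times S)$, $\gamma\neq 1$; in that case the union $\Gamma(A\times S)$ of it and all its translates is called a thick orbit. *)

theory Defs
  imports "HOL-Analysis.Analysis" "HOL-Algebra.Group_Action"
begin

definition cantor_set :: "'x topology \<Rightarrow> bool" where
  "cantor_set X \<longleftrightarrow>
     X homeomorphic_space product_topology (\<lambda>_::nat. discrete_topology (UNIV::bool set)) UNIV"

definition diag_act :: "('g \<Rightarrow> 'x \<Rightarrow> 'x) \<Rightarrow> ('g \<Rightarrow> 'm \<Rightarrow> 'm) \<Rightarrow> 'g \<Rightarrow> 'x \<times> 'm \<Rightarrow> 'x \<times> 'm" where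
  "diag_act \<phi> \<psi> g = (\<lambda>(x, m). (\<phi> g x, \<psi> g m))"

definition thick_set :: "'x topology \<Rightarrow> 'x set \<Rightarrow> ('m::metric_space) set \<Rightarrow> bool" where
  "thick_set X A S \<longleftrightarrow> A \<subseteq> topspace X \<and> closedin X A \<and> openin X A \<and> bounded S"

definition non_self_intersecting ::
  "('g, 'b) monoid_scheme \<Rightarrow> ('g \<Rightarrow> 'x \<Rightarrow> 'x) \<Rightarrow> ('g \<Rightarrow> 'm \<Rightarrow> 'm) \<Rightarrow> 'x set \<Rightarrow> 'm set \<Rightarrow> bool" where
  "non_self_intersecting G \<phi> \<psi> A S \<longleftrightarrow>
     (\<forall>g\<in>carrier G. g \<noteq> \<one>\<^bsub>G\<^esub> \<longrightarrow> diag_act \<phi> \<psi> g ` (A \<times> S) \<inter> (A \<times> S) = {})"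

definition thick_orbit ::
  "('g, 'b) monoid_scheme \<Rightarrow> ('g \<Rightarrow> 'x \<Rightarrow> 'x) \<Rightarrow> ('g \<Rightarrow> 'm \<Rightarrow> 'm) \<Rightarrow> 'x set \<Rightarrow> 'm set \<Rightarrow> ('x \<times> 'm) set" where
  "thick_orbit G \<phi> \<psi> A S = (\<Union>g\<in>carrier G. diag_act \<phi> \<psi> g ` (A \<times> S))"

text \<open>Properties of a deck-transformation action of Gamma = pi_1(M) on the universal
  cover M~ of a closed Riemannian manifold M (with the Riemannian distance):
  free, by isometries, properly discontinuous and cocompact; M~ is a proper,
  connected, simply connected metric space.\<close>
definition deck_action :: "('g, 'b) monoid_scheme \<Rightarrow> ('g \<Rightarrow> 'm::heine_borel \<Rightarrow> 'm) \<Rightarrow> bool" where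
  "deck_action G \<psi> \<longleftrightarrow>
     group_action G (UNIV::'m set) \<psi> \<and>
     connected (UNIV::'m set) \<and> simply_connected (UNIV::'m set) \<and>
     (\<forall>g\<in>carrier G. \<forall>a b. dist (\<psi> g a) (\<psi> g b) = dist a b) \<and>
     (\<forall>g\<in>carrier G. \<forall>m. \<psi> g m = m \<longrightarrow> g = \<one>\<^bsub>G\<^esub>) \<and>
     (\<forall>K. compact K \<longrightarrow> finite {g\<in>carrier G. \<psi> g ` K \<inter> K \<noteq> {}}) \<and>
     (\<exists>K. compact K \<and> (\<Union>g\<in>carrier G. \<psi> g ` K) = UNIV)"

end

theory Submission
  imports Defs
begin

text \<open>Let \<open>K\<close> be the closure of the ball together with \<open>S\<^sub>1 \<union> \<dots> \<union> S\<^sub>r\<close>; it is compact. A point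
  \<open>(x, q)\<close> with \<open>q\<close> in the ball lies in \<open>\<Gamma>(A\<^sub>j \<times> S\<^sub>j)\<close> only through a translate \<open>\<gamma>(A\<^sub>j \<times> S\<^sub>j)\<close> with
  \<open>\<gamma>K \<inter> K \<noteq> {}\<close>, and by proper discontinuity there are finitely many such \<open>\<gamma>\<close>. Hence over the ball,
  membership in the thick orbits is decided by which of the finitely many clopen sets \<open>\<gamma>A\<^sub>j\<close> contain
  \<open>x\<close>, and the atoms of the Boolean algebra they generate form the required partition.\<close>

lemma clopenin_topspace_Int_INT:
  assumes "finite I" and "\<forall>i\<in>I. openin X (U i) \<and> closedin X (U i)"
  shows "openin X (topspace X \<inter> (\<Inter>i\<in>I. U i)) \<and> closedin X (topspace X \<inter> (\<Inter>i\<in>I. U i))"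
proof (cases "I = {}")
  case False
  then show ?thesis
    using assms openin_INT[of I X U] by (auto simp: Int_commute)
qed simp

lemma clopenin_atom:
  assumes "finite D" and "\<forall>d\<in>D. openin X (U d) \<and> closedin X (U d)"
  shows "openin X {y \<in> topspace X. \<forall>d\<in>D. y \<in> U d \<longleftrightarrow> x \<in> U d}
    \<and> closedin X {y \<in> topspace X. \<forall>d\<in>D. y \<in> U d \<longleftrightarrow> x \<in> U d}"
proof -
  define V where "V d = (if x \<in> U d then U d else topspace X - U d)" for d
  have "{y \<in> topspace X. \<forall>d\<in>D. y \<in> U d \<longleftrightarrow> x \<in> U d} = topspace X \<inter> (\<Inter>d\<in>D. V d)"
    by (auto simp: V_def)
  moreover have "openin X (V d) \<and> closedin X (V d)" if "d \<in> D" for d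
    using assms(2) that by (auto simp: V_def)
  ultimately show ?thesis
    using clopenin_topspace_Int_INT[OF assms(1), of X V] by simp
qed

lemma clopen_partition_on_refining:
  assumes "finite D" and "\<forall>d\<in>D. openin X (U d) \<and> closedin X (U d)"
  obtains \<Q> where "finite \<Q>" and "partition_on (topspace X) \<Q>"
    and "\<And>P. P \<in> \<Q> \<Longrightarrow> openin X P \<and> closedin X P"
    and "\<And>P x y d. P \<in> \<Q> \<Longrightarrow> x \<in> P \<Longrightarrow> y \<in> P \<Longrightarrow> d \<in> D \<Longrightarrow> x \<in> U d \<longleftrightarrow> y \<in> U d"
proof
  define atom where "atom x = {y \<in> topspace X. \<forall>d\<in>D. y \<in> U d \<longleftrightarrow> x \<in> U d}" for x
  define \<Q> where "\<Q> = atom ` topspace X"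
  have "atom x = {y \<in> topspace X. {d \<in> D. y \<in> U d} = {d \<in> D. x \<in> U d}}" for x
    unfolding atom_def by blast
  then have "\<Q> \<subseteq> (\<lambda>T. {y \<in> topspace X. {d \<in> D. y \<in> U d} = T}) ` Pow D"
    unfolding \<Q>_def by blast
  then show "finite \<Q>"
    by (rule finite_subset) (use assms(1) in simp)
  show "partition_on (topspace X) \<Q>"
    by (rule partition_onI) (auto simp: \<Q>_def atom_def disjnt_def)
  show "openin X P \<and> closedin X P" if "P \<in> \<Q>" for P
    using that clopenin_atom[OF assms] by (auto simp: \<Q>_def atom_def)
  show "x \<in> U d \<longleftrightarrow> y \<in> U d" if "P \<in> \<Q>" "x \<in> P" "y \<in> P" "d \<in> D" for P x y d
    using that by (auto simp: \<Q>_def atom_def)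
qed

lemma indexed_clopen_partition_refining:
  assumes "finite D" and "\<forall>d\<in>D. openin X (U d) \<and> closedin X (U d)"
  obtains k :: nat and P
  where "\<forall>i<k. P i \<noteq> {} \<and> P i \<subseteq> topspace X \<and> closedin X (P i) \<and> openin X (P i)"
    and "\<forall>i<k. \<forall>i'<k. i \<noteq> i' \<longrightarrow> P i \<inter> P i' = {}"
    and "(\<Union>i<k. P i) = topspace X"
    and "\<forall>i<k. \<forall>x\<in>P i. \<forall>y\<in>P i. \<forall>d\<in>D. x \<in> U d \<longleftrightarrow> y \<in> U d"
proof -
  obtain \<Q> where fin: "finite \<Q>" and part: "partition_on (topspace X) \<Q>"
    and clopen: "\<And>P. P \<in> \<Q> \<Longrightarrow> openin X P \<and> closedin X P"
    and refines: "\<And>P x y d. P \<in> \<Q> \<Longrightarrow> x \<in> P \<Longrightarrow> y \<in> P \<Longrightarrow> d \<in> D \<Longrightarrow> x \<in> U d \<longleftrightarrow> y \<in> U d"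
    by (erule clopen_partition_on_refining[OF assms])
  obtain P where P: "bij_betw P {..<card \<Q>} \<Q>"
    using ex_bij_betw_nat_finite[OF fin] by (metis atLeast0LessThan)
  have in_\<Q>: "P i \<in> \<Q>" if "i < card \<Q>" for i
    using P that by (simp add: bij_betwE)
  have disj: "P i \<inter> P i' = {}" if "i < card \<Q>" "i' < card \<Q>" "i \<noteq> i'" for i i'
  proof -
    have "P i \<noteq> P i'"
      using P that by (auto simp: bij_betw_def dest: inj_onD)
    then have "disjnt (P i) (P i')"
      using partition_onD2[OF part] in_\<Q> that by (simp add: pairwiseD)
    then show ?thesis
      by (simp add: disjnt_def)
  qed
  show thesis
  proof (rule that[of "card \<Q>" P])
    show "\<forall>i<card \<Q>. P i \<noteq> {} \<and> P i \<subseteq> topspace X \<and> closedin X (P i) \<and> openin X (P i)"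
    proof (intro allI impI conjI)
      fix i assume "i < card \<Q>"
      then have "P i \<in> \<Q>"
        by (rule in_\<Q>)
      then show "P i \<noteq> {}" "P i \<subseteq> topspace X" "closedin X (P i)" "openin X (P i)"
        using clopen partition_onD3[OF part] by (auto simp: openin_subset)
    qed
    show "\<forall>i<card \<Q>. \<forall>i'<card \<Q>. i \<noteq> i' \<longrightarrow> P i \<inter> P i' = {}"
      using disj by blast
    show "(\<Union>i<card \<Q>. P i) = topspace X"
      using partition_onD1[OF part] P by (simp add: bij_betw_def)
    show "\<forall>i<card \<Q>. \<forall>x\<in>P i. \<forall>y\<in>P i. \<forall>d\<in>D. x \<in> U d \<longleftrightarrow> y \<in> U d"
      using in_\<Q> refines by blast
  qed
qed

lemma thick_orbit_mem_iff_near: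
  assumes "group G" and "group_action G (topspace X) \<phi>"
    and "A \<subseteq> topspace X" and "S \<subseteq> K" and "x \<in> topspace X" and "q \<in> K"
  shows "(x, q) \<in> thick_orbit G \<phi> \<psi> A S \<longleftrightarrow>
    (\<exists>g\<in>carrier G. \<psi> g ` K \<inter> K \<noteq> {} \<and> \<phi> (inv\<^bsub>G\<^esub> g) x \<in> A \<and> q \<in> \<psi> g ` S)"
proof
  assume "(x, q) \<in> thick_orbit G \<phi> \<psi> A S"
  then obtain g where g: "g \<in> carrier G" and "(x, q) \<in> diag_act \<phi> \<psi> g ` (A \<times> S)"
    unfolding thick_orbit_def by blast
  then obtain a s where a: "a \<in> A" and s: "s \<in> S" and x: "x = \<phi> g a" and q: "q = \<psi> g s"
    by (auto simp: diag_act_def)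
  have "\<phi> (inv\<^bsub>G\<^esub> g) x = a"
    using group_action.orbit_sym_aux[OF assms(2) g _ x[symmetric]] a assms(3) by blast
  moreover have "\<psi> g ` K \<inter> K \<noteq> {}"
    using s q assms(4,6) by blast
  ultimately show "\<exists>g\<in>carrier G. \<psi> g ` K \<inter> K \<noteq> {} \<and> \<phi> (inv\<^bsub>G\<^esub> g) x \<in> A \<and> q \<in> \<psi> g ` S"
    using g a s q by blast
next
  assume "\<exists>g\<in>carrier G. \<psi> g ` K \<inter> K \<noteq> {} \<and> \<phi> (inv\<^bsub>G\<^esub> g) x \<in> A \<and> q \<in> \<psi> g ` S"
  then obtain g s where g: "g \<in> carrier G" and a: "\<phi> (inv\<^bsub>G\<^esub> g) x \<in> A"
    and s: "s \<in> S" and q: "q = \<psi> g s"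
    by blast
  have "inv\<^bsub>G\<^esub> g \<in> carrier G"
    using assms(1) g by simp
  from group_action.orbit_sym_aux[OF assms(2) this assms(5) refl]
  have "\<phi> g (\<phi> (inv\<^bsub>G\<^esub> g) x) = x"
    using assms(1) g by simp
  then have "(x, q) = diag_act \<phi> \<psi> g (\<phi> (inv\<^bsub>G\<^esub> g) x, s)"
    using q by (simp add: diag_act_def)
  then show "(x, q) \<in> thick_orbit G \<phi> \<psi> A S"
    unfolding thick_orbit_def using g a s by blast
qed

lemma thick_orbits_determined_by_finitely_many_clopens:
  fixes \<psi> :: "'g \<Rightarrow> 'm::heine_borel \<Rightarrow> 'm" and A :: "'j \<Rightarrow> 'x set"
  assumes "group G" and "group_action G (topspace X) \<phi>"
    and "\<forall>g\<in>carrier G. continuous_map X X (\<phi> g)"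
    and "\<forall>K. compact K \<longrightarrow> finite {g \<in> carrier G. \<psi> g ` K \<inter> K \<noteq> {}}"
    and "bounded B" and "finite J" and "\<forall>j\<in>J. thick_set X (A j) (S j)"
  obtains D and U :: "'g \<times> 'j \<Rightarrow> 'x set"
  where "finite D" and "\<forall>d\<in>D. openin X (U d) \<and> closedin X (U d)"
    and "\<And>x y q j. x \<in> topspace X \<Longrightarrow> y \<in> topspace X \<Longrightarrow> \<forall>d\<in>D. x \<in> U d \<longleftrightarrow> y \<in> U d \<Longrightarrow>
      q \<in> B \<Longrightarrow> j \<in> J \<Longrightarrow>
      (x, q) \<in> thick_orbit G \<phi> \<psi> (A j) (S j) \<longleftrightarrow> (y, q) \<in> thick_orbit G \<phi> \<psi> (A j) (S j)"
proof
  define K where "K = closure (B \<union> (\<Union>j\<in>J. S j))"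
  define F where "F = {g \<in> carrier G. \<psi> g ` K \<inter> K \<noteq> {}}"
  define U where "U = (\<lambda>(g, j). {x \<in> topspace X. \<phi> (inv\<^bsub>G\<^esub> g) x \<in> A j})"
  have "bounded (\<Union>j\<in>J. S j)"
    using assms(6,7) by (intro bounded_UN) (auto simp: thick_set_def)
  then have "bounded (B \<union> (\<Union>j\<in>J. S j))"
    using assms(5) by simp
  then have "compact K"
    unfolding K_def using compact_closure by blast
  then show "finite (F \<times> J)"
    using assms(4,6) by (simp add: F_def)
  show "\<forall>d\<in>F \<times> J. openin X (U d) \<and> closedin X (U d)"
  proof
    fix d assume "d \<in> F \<times> J"
    then obtain g j where d: "d = (g, j)" "g \<in> carrier G" "j \<in> J"
      unfolding F_def by blast
    have "continuous_map X X (\<phi> (inv\<^bsub>G\<^esub> g))"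
      using assms(1,3) d by simp
    moreover have "openin X (A j)" "closedin X (A j)"
      using assms(7) d by (auto simp: thick_set_def)
    ultimately show "openin X (U d) \<and> closedin X (U d)"
      unfolding d U_def
      by (simp add: openin_continuous_map_preimage closedin_continuous_map_preimage)
  qed
  have K_cover: "B \<union> (\<Union>j\<in>J. S j) \<subseteq> K"
    unfolding K_def by (rule closure_subset)
  have orbit_iff: "(x, q) \<in> thick_orbit G \<phi> \<psi> (A j) (S j) \<longleftrightarrow>
      (\<exists>g\<in>F. x \<in> U (g, j) \<and> q \<in> \<psi> g ` S j)"
    if x: "x \<in> topspace X" and q: "q \<in> B" and j: "j \<in> J" for x q j
  proof -
    have A: "A j \<subseteq> topspace X"
      using assms(7) j by (simp add: thick_set_def)
    have S: "S j \<subseteq> K" and "q \<in> K"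
      using K_cover j q by blast+
    show ?thesis
      unfolding thick_orbit_mem_iff_near[OF assms(1,2) A S x \<open>q \<in> K\<close>]
      using x by (auto simp: F_def U_def)
  qed
  show "(x, q) \<in> thick_orbit G \<phi> \<psi> (A j) (S j) \<longleftrightarrow> (y, q) \<in> thick_orbit G \<phi> \<psi> (A j) (S j)"
    if x: "x \<in> topspace X" and y: "y \<in> topspace X" and agree: "\<forall>d\<in>F \<times> J. x \<in> U d \<longleftrightarrow> y \<in> U d"
      and q: "q \<in> B" and j: "j \<in> J" for x y q j
  proof -
    have "x \<in> U (g, j) \<longleftrightarrow> y \<in> U (g, j)" if "g \<in> F" for g
      using agree that j by blast
    then show ?thesis
      unfolding orbit_iff[OF x q j] orbit_iff[OF y q j] by blast
  qed
qed

lemma thick_orbits_clopen_partition: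
  fixes \<psi> :: "'g \<Rightarrow> 'm::heine_borel \<Rightarrow> 'm" and A :: "'j \<Rightarrow> 'x set"
  assumes "group G" and "group_action G (topspace X) \<phi>"
    and "\<forall>g\<in>carrier G. continuous_map X X (\<phi> g)"
    and "\<forall>K. compact K \<longrightarrow> finite {g \<in> carrier G. \<psi> g ` K \<inter> K \<noteq> {}}"
    and "bounded B" and "finite J" and "\<forall>j\<in>J. thick_set X (A j) (S j)"
  obtains k :: nat and P
  where "\<forall>i<k. P i \<noteq> {} \<and> P i \<subseteq> topspace X \<and> closedin X (P i) \<and> openin X (P i)"
    and "\<forall>i<k. \<forall>i'<k. i \<noteq> i' \<longrightarrow> P i \<inter> P i' = {}"
    and "(\<Union>i<k. P i) = topspace X"
    and "\<forall>i<k. \<forall>x\<in>P i. \<forall>y\<in>P i. \<forall>q\<in>B. \<forall>j\<in>J.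
      (x, q) \<in> thick_orbit G \<phi> \<psi> (A j) (S j) \<longleftrightarrow> (y, q) \<in> thick_orbit G \<phi> \<psi> (A j) (S j)"
proof -
  obtain D and U :: "'g \<times> 'j \<Rightarrow> 'x set" where D: "finite D"
    and clopen: "\<forall>d\<in>D. openin X (U d) \<and> closedin X (U d)"
    and determines: "\<And>x y q j. x \<in> topspace X \<Longrightarrow> y \<in> topspace X \<Longrightarrow>
      \<forall>d\<in>D. x \<in> U d \<longleftrightarrow> y \<in> U d \<Longrightarrow> q \<in> B \<Longrightarrow> j \<in> J \<Longrightarrow>
      (x, q) \<in> thick_orbit G \<phi> \<psi> (A j) (S j) \<longleftrightarrow> (y, q) \<in> thick_orbit G \<phi> \<psi> (A j) (S j)"
    by (erule thick_orbits_determined_by_finitely_many_clopens[OF assms])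
  obtain k :: nat and P
    where parts: "\<forall>i<k. P i \<noteq> {} \<and> P i \<subseteq> topspace X \<and> closedin X (P i) \<and> openin X (P i)"
      and disjoint: "\<forall>i<k. \<forall>i'<k. i \<noteq> i' \<longrightarrow> P i \<inter> P i' = {}"
      and cover: "(\<Union>i<k. P i) = topspace X"
      and refines: "\<forall>i<k. \<forall>x\<in>P i. \<forall>y\<in>P i. \<forall>d\<in>D. x \<in> U d \<longleftrightarrow> y \<in> U d"
    by (erule indexed_clopen_partition_refining[OF D clopen])
  have "\<forall>i<k. \<forall>x\<in>P i. \<forall>y\<in>P i. \<forall>q\<in>B. \<forall>j\<in>J.
      (x, q) \<in> thick_orbit G \<phi> \<psi> (A j) (S j) \<longleftrightarrow> (y, q) \<in> thick_orbit G \<phi> \<psi> (A j) (S j)"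
  proof (intro allI impI ballI)
    fix i x y q j
    assume i: "i < k" and x: "x \<in> P i" and y: "y \<in> P i" and q: "q \<in> B" and j: "j \<in> J"
    have "x \<in> topspace X" "y \<in> topspace X"
      using parts i x y by blast+
    moreover have "\<forall>d\<in>D. x \<in> U d \<longleftrightarrow> y \<in> U d"
      using refines i x y by blast
    ultimately show "(x, q) \<in> thick_orbit G \<phi> \<psi> (A j) (S j) \<longleftrightarrow> (y, q) \<in> thick_orbit G \<phi> \<psi> (A j) (S j)"
      using q j by (rule determines)
  qed
  with parts disjoint cover show thesis
    by (rule that)
qed

theorem proposition4p1:
  fixes G :: "('g, 'b) monoid_scheme"
    and X :: "'x topology"
    and \<phi> :: "'g \<Rightarrow> 'x \<Rightarrow> 'x"
    and \<psi> :: "'g \<Rightarrow> 'm::heine_borel \<Rightarrow> 'm"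
    and A :: "nat \<Rightarrow> 'x set" and S :: "nat \<Rightarrow> 'm set" and r :: nat
    and p :: 'm and R :: real
  assumes "group G"
    and "cantor_set X"
    and "group_action G (topspace X) \<phi>"
    and "\<forall>g\<in>carrier G. continuous_map X X (\<phi> g)"
    and "\<forall>g\<in>carrier G. \<forall>x\<in>topspace X. \<phi> g x = x \<longrightarrow> g = \<one>\<^bsub>G\<^esub>"
    and "deck_action G \<psi>"
    and "\<forall>j<r. thick_set X (A j) (S j) \<and> non_self_intersecting G \<phi> \<psi> (A j) (S j)"
  shows "\<exists>k::nat. \<exists>P :: nat \<Rightarrow> 'x set.
           (\<forall>i<k. P i \<noteq> {} \<and> P i \<subseteq> topspace X \<and> closedin X (P i) \<and> openin X (P i)) \<and>
           (\<forall>i<k. \<forall>i'<k. i \<noteq> i' \<longrightarrow> P i \<inter> P i' = {}) \<and>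
           (\<Union>i<k. P i) = topspace X \<and>
           (\<forall>i<k. \<forall>x\<in>P i. \<forall>y\<in>P i. \<forall>q\<in>ball p R. \<forall>j<r.
              (x, q) \<in> thick_orbit G \<phi> \<psi> (A j) (S j) \<longleftrightarrow>
              (y, q) \<in> thick_orbit G \<phi> \<psi> (A j) (S j))"
proof -
  have proper: "\<forall>K. compact K \<longrightarrow> finite {g \<in> carrier G. \<psi> g ` K \<inter> K \<noteq> {}}"
    using assms(6) by (simp add: deck_action_def)
  have thick: "\<forall>j\<in>{..<r}. thick_set X (A j) (S j)"
    using assms(7) by simp
  obtain k :: nat and P
    where parts: "\<forall>i<k. P i \<noteq> {} \<and> P i \<subseteq> topspace X \<and> closedin X (P i) \<and> openin X (P i)"
      and disjoint: "\<forall>i<k. \<forall>i'<k. i \<noteq> i' \<longrightarrow> P i \<inter> P i' = {}"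
      and cover: "(\<Union>i<k. P i) = topspace X"
      and same: "\<forall>i<k. \<forall>x\<in>P i. \<forall>y\<in>P i. \<forall>q\<in>ball p R. \<forall>j\<in>{..<r}.
        (x, q) \<in> thick_orbit G \<phi> \<psi> (A j) (S j) \<longleftrightarrow> (y, q) \<in> thick_orbit G \<phi> \<psi> (A j) (S j)"
    by (erule thick_orbits_clopen_partition[OF assms(1,3,4) proper bounded_ball finite_lessThan thick])
  from same have "\<forall>i<k. \<forall>x\<in>P i. \<forall>y\<in>P i. \<forall>q\<in>ball p R. \<forall>j<r.
      (x, q) \<in> thick_orbit G \<phi> \<psi> (A j) (S j) \<longleftrightarrow> (y, q) \<in> thick_orbit G \<phi> \<psi> (A j) (S j)"
    unfolding Ball_def lessThan_iff .
  with parts disjoint cover show ?thesis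
    by blast
qed

end
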